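(* Let $F$ be a Ferrers diagram, $T\in\mathsf{EWtab}(F)$ and $S$ the supplementary tableau to $T$. Let $j\in\mathsf{rows}(F)$ and $k\in\mathsf{cols}(F)$ with $j>k$. Then $S_{jk}=0$ if and only if there exists $k'\in\mathsf{cols}(F)$ with $k'>j$ such that $T_{jk'}=0$ and, for all $j'\in\mathsf{rows}(F)$ with $j'<k$, if $T_{j'k'}=0$ then $T_{j'k}=0$. Otherwise $S_{jk}=1$.
   Context: Ferrers diagrams and graphs: a Ferrers diagram $F$ (English convention) of semiperimeter $n+1$ has rows and columns labeled by $0,\ldots,n$: the $n+1$ unit steps of its south-east boundary path, traversed from top-right to bottom-left, are labeled $0,\ldots,n$; a vertical step labels the row it bounds, a horizontal step the column it bounds (top row labeled $0$). $\mathsf{rows}(F)$, $\mathsf{cols}(F)$ are the label sets; $F$ has a cell in row $i$, column $j$ iff $i<j$. $G(F)$ has vertex set $\{0,\ldots,n\}$ with edges $\{i,j\}$ for $i\in\mathsf{rows}(F)$, $j\in\mathsf{cols}(F)$, $i<j$. Sandpile model on $G(F)$ with sink $0$: configurations $c\in\mathbb{N}^n$; non-sink $v$ unstable if $c_v\ge\deg(v)$; toppling sends one grain to each neighbour (grains to $0$ disappear); toppling the sink adds one grain to each neighbour of $0$. Canonical toppling of a recurrent configuration $c$: topple the sink ($U^{(0)}_c=\{0\}$), then alternately topple simultaneously all unstable vertices in $\mathsf{cols}(F)$ ($V^{(1)}_c$), all unstable in $\mathsf{rows}(F)$ ($U^{(1)}_c$), etc.; $\mathsf{CanonTop}(c)=(U^{(0)}_c,V^{(1)}_c,U^{(1)}_c,\ldots)$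 is an ordered partition of $\{0,\ldots,n\}$. EW-tableaux: $0/1$-fillings $T$ of $F$ ($T_{ij}$ = entry in row $i$, column $j$) with top row all 1s, a 0 in every other row, and no rectangle with 0s in two diagonally opposite corners and 1s in the other two; $\mathsf{EWtab}(F)$ is their set. $\phi_{TC}(T)$ is the (recurrent) configuration with $c_i$ = number of 1s in row $i$ ($i\in\mathsf{rows}(F)$), $c_i$ = number of 0s in column $i$ ($i\in\mathsf{cols}(F)$). $\mathsf{CanonTop}(T):=\mathsf{CanonTop}(\phi_{TC}(T))$. Supplementary tableau $S=S(T)$: the rectangular $|\mathsf{rows}(F)|\times|\mathsf{cols}(F)|$ array with $S_{ij}=1$ if row label $i$ lies in an earlier block of $\mathsf{CanonTop}(T)$ than column label $j$, and $S_{ij}=0$ otherwise. *)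

theory Defs
  imports Main
begin

(* A Ferrers diagram of semiperimeter n+1 is encoded by n together with the set R
   of labels of its rows (vertical boundary steps); the remaining labels in {0..n}
   are the column labels.  The boundary path starts with a vertical step (top row
   labelled 0) and ends with a horizontal step (leftmost column labelled n). *)

definition cols :: "nat \<Rightarrow> nat set \<Rightarrow> nat set" where
  "cols n R = {0..n} - R"

definition ferrers :: "nat \<Rightarrow> nat set \<Rightarrow> bool" where
  "ferrers n R \<longleftrightarrow> R \<subseteq> {0..n} \<and> 0 \<in> R \<and> n \<notin> R"

definition is_cell :: "nat \<Rightarrow> nat set \<Rightarrow> nat \<Rightarrow> nat \<Rightarrow> bool" where
  "is_cell n R i j \<longleftrightarrow> i \<in> R \<and> j \<in> cols n R \<and> i < j"

definition adj :: "nat \<Rightarrow> nat set \<Rightarrow> nat \<Rightarrow> nat \<Rightarrow> bool" where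
  "adj n R u v \<longleftrightarrow> is_cell n R u v \<or> is_cell n R v u"

definition deg :: "nat \<Rightarrow> nat set \<Rightarrow> nat \<Rightarrow> nat" where
  "deg n R v = card {w \<in> {0..n}. adj n R v w}"

definition EWtab :: "nat \<Rightarrow> nat set \<Rightarrow> (nat \<Rightarrow> nat \<Rightarrow> nat) set" where
  "EWtab n R = {T.
     (\<forall>i j. is_cell n R i j \<longrightarrow> T i j \<in> {0, 1}) \<and>
     (\<forall>j. is_cell n R 0 j \<longrightarrow> T 0 j = 1) \<and>
     (\<forall>i \<in> R. i \<noteq> 0 \<longrightarrow> (\<exists>j. is_cell n R i j \<and> T i j = 0)) \<and>
     (\<forall>i i' j j'. i \<in> R \<longrightarrow> i' \<in> R \<longrightarrow> j \<in> cols n R \<longrightarrow> j' \<in> cols n R \<longrightarrow>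
        i < i' \<longrightarrow> j < j' \<longrightarrow> i' < j \<longrightarrow>
        \<not> (T i j = 0 \<and> T i' j' = 0 \<and> T i j' = 1 \<and> T i' j = 1) \<and>
        \<not> (T i j' = 0 \<and> T i' j = 0 \<and> T i j = 1 \<and> T i' j' = 1))}"

(* the configuration phi_TC(T) (meaningful on the non-sink vertices 1..n) *)
definition phiTC :: "nat \<Rightarrow> nat set \<Rightarrow> (nat \<Rightarrow> nat \<Rightarrow> nat) \<Rightarrow> nat \<Rightarrow> nat" where
  "phiTC n R T v =
     (if v \<in> R then card {j. is_cell n R v j \<and> T v j = 1}
      else card {i. is_cell n R i v \<and> T i v = 0})"

definition sink_topple :: "nat \<Rightarrow> nat set \<Rightarrow> (nat \<Rightarrow> nat) \<Rightarrow> nat \<Rightarrow> int" where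
  "sink_topple n R c = (\<lambda>v. int (c v) + (if adj n R 0 v then 1 else 0))"

definition unstable_block :: "nat \<Rightarrow> nat set \<Rightarrow> nat \<Rightarrow> (nat \<Rightarrow> int) \<Rightarrow> nat set" where
  "unstable_block n R t cf =
     {v \<in> {1..n}. (if odd t then v \<in> cols n R else v \<in> R) \<and> cf v \<ge> int (deg n R v)}"

definition topple_set :: "nat \<Rightarrow> nat set \<Rightarrow> nat set \<Rightarrow> (nat \<Rightarrow> int) \<Rightarrow> nat \<Rightarrow> int" where
  "topple_set n R B cf = (\<lambda>w. cf w - (if w \<in> B then int (deg n R w) else 0)
                              + int (card {v \<in> B. adj n R v w}))"

primrec ct_conf :: "nat \<Rightarrow> nat set \<Rightarrow> (nat \<Rightarrow> nat) \<Rightarrow> nat \<Rightarrow> nat \<Rightarrow> int" where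
  "ct_conf n R c 0 = sink_topple n R c"
| "ct_conf n R c (Suc t) =
     topple_set n R (unstable_block n R (Suc t) (ct_conf n R c t)) (ct_conf n R c t)"

(* the t-th block of CanonTop(c): block 0 = U^(0) = {0}, block 2k-1 = V^(k),
   block 2k = U^(k) *)
definition canon_block :: "nat \<Rightarrow> nat set \<Rightarrow> (nat \<Rightarrow> nat) \<Rightarrow> nat \<Rightarrow> nat set" where
  "canon_block n R c t =
     (if t = 0 then {0} else unstable_block n R t (ct_conf n R c (t - 1)))"

definition block_index :: "nat \<Rightarrow> nat set \<Rightarrow> (nat \<Rightarrow> nat) \<Rightarrow> nat \<Rightarrow> nat" where
  "block_index n R c v = (LEAST t. v \<in> canon_block n R c t)"

definition supp_tab :: "nat \<Rightarrow> nat set \<Rightarrow> (nat \<Rightarrow> nat \<Rightarrow> nat) \<Rightarrow> nat \<Rightarrow> nat \<Rightarrow> nat" where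
  "supp_tab n R T i j =
     (if block_index n R (phiTC n R T) i < block_index n R (phiTC n R T) j then 1 else 0)"

end

theory Submission
  imports Defs
begin

text \<open>
  Let the phase of a vertex be the index of its block in the canonical toppling of
  phi_TC(T). Counting grains shows that this toppling is governed by T alone: a column topples
  in the first odd phase by which all rows with a 1 in it have toppled, and a row other than 0
  in the first even phase by which all columns where it has a 0 have toppled. Every vertex
  topples eventually: the rows that never topple would be linked by an endless chain
  "a has a 0 in a column where d has a 1", and the forbidden rectangles let such a chain be
  shortcut past its largest row, which is impossible in a finite set.

  Hence T i k = 1 forces phase i < phase k, T i k = 0 forces phase k < phase i, and the phase
  of a row j > 0 is one more than the largest phase of a column where j has a 0. Rows have even
  and columns odd phases, so S j k = 0 iff phase k < phase j, i.e. iff some column k' > j with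
  T j k' = 0 has phase k' >= phase k; and for columns k < k' this holds iff every row with a 1
  in column k also has a 1 in column k'.
\<close>

text \<open>The stability test of a vertex after some phases: X and Y partition its neighbours, it
  started with card X grains, P is the set of toppled vertices and b says whether the vertex
  itself has toppled.\<close>

lemma card_Un_threshold_iff:
  fixes X Y P :: "'a set"
  assumes "finite X" "finite Y" "X \<inter> Y = {}" "Y \<noteq> {}"
    and "\<not> b \<Longrightarrow> (X \<union> Y) \<inter> P \<subseteq> Y"
  shows "int (card (X \<union> Y)) \<le> int (card X) + int (card ((X \<union> Y) \<inter> P))
           - (if b then int (card (X \<union> Y)) else 0) \<longleftrightarrow> \<not> b \<and> Y \<subseteq> P"
proof (cases b)
  case True
  have "card X < card (X \<union> Y)"
    using assms(1-4) by (intro psubset_card_mono) auto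
  moreover have "card ((X \<union> Y) \<inter> P) \<le> card (X \<union> Y)"
    using assms(1,2) by (intro card_mono) auto
  ultimately show ?thesis using True by auto
next
  case False
  have sub: "(X \<union> Y) \<inter> P \<subseteq> Y" using assms(5) False .
  have "card (X \<union> Y) = card X + card Y" using assms(1-3) by (rule card_Un_disjoint)
  then have "int (card (X \<union> Y)) \<le> int (card X) + int (card ((X \<union> Y) \<inter> P))
               \<longleftrightarrow> card Y \<le> card ((X \<union> Y) \<inter> P)" by simp
  also have "\<dots> \<longleftrightarrow> (X \<union> Y) \<inter> P = Y"
    using sub assms(2) card_seteq card_mono by (metis order_refl)
  also have "\<dots> \<longleftrightarrow> Y \<subseteq> P" using sub by blast
  finally show ?thesis using False by simp
qed

locale ew_tableau =
  fixes n :: nat and R :: "nat set" and T :: "nat \<Rightarrow> nat \<Rightarrow> nat"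
  assumes ferrers: "ferrers n R" and EW: "T \<in> EWtab n R"
begin

abbreviation cell :: "nat \<Rightarrow> nat \<Rightarrow> bool" where
  "cell i j \<equiv> is_cell n R i j"

lemma rows_subset: "R \<subseteq> {0..n}" and zero_in_rows: "0 \<in> R"
  using ferrers by (auto simp: ferrers_def)

lemma entry_01: "cell i j \<Longrightarrow> T i j = 0 \<or> T i j = 1"
  using EW by (auto simp: EWtab_def)

lemma top_row_one: "cell 0 j \<Longrightarrow> T 0 j = 1"
  using EW by (auto simp: EWtab_def)

lemma row_has_zero: "i \<in> R \<Longrightarrow> i \<noteq> 0 \<Longrightarrow> \<exists>j. cell i j \<and> T i j = 0"
  using EW by (auto simp: EWtab_def)

lemma no_forbidden_rectangle:
  assumes "i \<in> R" "i' \<in> R" "j \<in> cols n R" "j' \<in> cols n R" "i < i'" "j < j'" "i' < j"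
  shows "\<not> (T i j = 0 \<and> T i' j' = 0 \<and> T i j' = 1 \<and> T i' j = 1)"
    and "\<not> (T i j' = 0 \<and> T i' j = 0 \<and> T i j = 1 \<and> T i' j' = 1)"
  using EW assms unfolding EWtab_def by blast+

lemma col_pos: "k \<in> cols n R \<Longrightarrow> 0 < k"
  using zero_in_rows by (cases k) (auto simp: cols_def)

lemma cell_top_row: "k \<in> cols n R \<Longrightarrow> cell 0 k"
  using zero_in_rows col_pos by (auto simp: is_cell_def)

lemma finite_cells_in_col: "finite {i. cell i k}"
  by (rule finite_subset[of _ "{0..n}"]) (auto simp: is_cell_def cols_def)

lemma finite_cells_in_row: "finite {k. cell j k}"
  by (rule finite_subset[of _ "{0..n}"]) (auto simp: is_cell_def cols_def)

lemma adj_col: "k \<in> cols n R \<Longrightarrow> adj n R v k \<longleftrightarrow> cell v k"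
  by (auto simp: adj_def is_cell_def cols_def)

lemma adj_row: "j \<in> R \<Longrightarrow> adj n R v j \<longleftrightarrow> cell j v"
  by (auto simp: adj_def is_cell_def cols_def)

lemma deg_col: "k \<in> cols n R \<Longrightarrow> deg n R k = card {i. cell i k}"
  unfolding deg_def by (rule arg_cong[where f = card]) (auto simp: adj_def is_cell_def cols_def)

lemma deg_row: "j \<in> R \<Longrightarrow> deg n R j = card {k. cell j k}"
  unfolding deg_def by (rule arg_cong[where f = card]) (auto simp: adj_def is_cell_def cols_def)

abbreviation c :: "nat \<Rightarrow> nat" where
  "c \<equiv> phiTC n R T"

abbreviation conf :: "nat \<Rightarrow> nat \<Rightarrow> int" where
  "conf t \<equiv> ct_conf n R c t"

abbreviation block :: "nat \<Rightarrow> nat set" where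
  "block t \<equiv> canon_block n R c t"

abbreviation phase :: "nat \<Rightarrow> nat" where
  "phase v \<equiv> block_index n R c v"

definition toppled :: "nat \<Rightarrow> nat set" where
  "toppled t = (\<Union>s\<le>t. block s)"

lemma block_0: "block 0 = {0}"
  by (simp add: canon_block_def)

lemma block_Suc: "block (Suc t) = unstable_block n R (Suc t) (conf t)"
  by (simp add: canon_block_def)

lemma block_Suc_subset: "block (Suc t) \<subseteq> {1..n}"
  by (auto simp: block_Suc unstable_block_def)

lemma toppled_0: "toppled 0 = {0}"
  by (simp add: toppled_def block_0)

lemma toppled_Suc: "toppled (Suc t) = toppled t \<union> block (Suc t)"
  by (auto simp: toppled_def le_Suc_eq)

lemma zero_toppled: "0 \<in> toppled t"
  using block_0 by (auto simp: toppled_def)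

lemma toppled_mono: "s \<le> t \<Longrightarrow> toppled s \<subseteq> toppled t"
  unfolding toppled_def by (meson UN_mono atMost_subset_iff order_refl)

lemma finite_toppled: "finite (toppled t)"
proof (induction t)
  case (Suc t)
  then show ?case using block_Suc_subset[of t] by (auto simp: toppled_Suc intro: finite_subset)
qed (simp add: toppled_0)

definition tableau_closed :: "nat set \<Rightarrow> bool" where
  "tableau_closed S \<longleftrightarrow>
     (\<forall>i k. cell i k \<longrightarrow> T i k = 0 \<longrightarrow> i \<in> S \<longrightarrow> k \<in> S) \<and>
     (\<forall>i k. cell i k \<longrightarrow> T i k = 1 \<longrightarrow> k \<in> S \<longrightarrow> i \<in> S)"

definition conf_formula :: "nat \<Rightarrow> bool" where
  "conf_formula t \<longleftrightarrow> (\<forall>w. conf t w = int (c w) + int (card {v \<in> toppled t. adj n R v w})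
                                    - (if w \<in> toppled t - {0} then int (deg n R w) else 0))"

lemma conf_formula_0: "conf_formula 0"
proof -
  have "{v \<in> {0}. adj n R v w} = (if adj n R 0 w then {0} else {})" for w
    by auto
  then show ?thesis by (simp add: conf_formula_def toppled_0 sink_topple_def)
qed

lemma conf_formula_Suc:
  assumes F: "conf_formula t" and disj: "block (Suc t) \<inter> toppled t = {}"
  shows "conf_formula (Suc t)"
  unfolding conf_formula_def
proof
  fix w
  define B where "B = block (Suc t)"
  have B0: "0 \<notin> B" using block_Suc_subset[of t] by (auto simp: B_def)
  have "card {v \<in> toppled (Suc t). adj n R v w}
          = card {v \<in> toppled t. adj n R v w} + card {v \<in> B. adj n R v w}"
  proof -
    have "{v \<in> toppled (Suc t). adj n R v w}
            = {v \<in> toppled t. adj n R v w} \<union> {v \<in> B. adj n R v w}"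
      by (auto simp: toppled_Suc B_def)
    moreover have "finite B" using block_Suc_subset[of t] by (auto simp: B_def intro: finite_subset)
    ultimately show ?thesis
      using disj finite_toppled[of t] by (auto simp: B_def intro: card_Un_disjoint)
  qed
  moreover have "conf (Suc t) w
                   = conf t w - (if w \<in> B then int (deg n R w) else 0) + int (card {v \<in> B. adj n R v w})"
    by (simp add: topple_set_def block_Suc B_def)
  ultimately show "conf (Suc t) w = int (c w) + int (card {v \<in> toppled (Suc t). adj n R v w})
                     - (if w \<in> toppled (Suc t) - {0} then int (deg n R w) else 0)"
    using F disj B0 unfolding conf_formula_def by (auto simp: toppled_Suc B_def)
qed

lemma col_in_block_Suc_iff_invariant:
  assumes I: "tableau_closed (toppled t)" and F: "conf_formula t" and k: "k \<in> cols n R"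
  shows "k \<in> block (Suc t) \<longleftrightarrow>
           odd (Suc t) \<and> k \<notin> toppled t \<and> (\<forall>i. cell i k \<longrightarrow> T i k = 1 \<longrightarrow> i \<in> toppled t)"
proof -
  define X where "X = {i. cell i k \<and> T i k = 0}"
  define Y where "Y = {i. cell i k \<and> T i k = 1}"
  have XY: "{i. cell i k} = X \<union> Y" by (auto simp: X_def Y_def dest: entry_01)
  have kR: "k \<notin> R" "k \<noteq> 0" using k col_pos by (auto simp: cols_def)
  have "conf t k = int (card X) + int (card ((X \<union> Y) \<inter> toppled t))
                     - (if k \<in> toppled t then int (card (X \<union> Y)) else 0)"
  proof -
    have "{v \<in> toppled t. adj n R v k} = (X \<union> Y) \<inter> toppled t"
      using k by (auto simp: adj_col XY[symmetric])
    then show ?thesis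
      using F kR k unfolding conf_formula_def by (simp add: phiTC_def X_def deg_col XY)
  qed
  moreover have "Y \<noteq> {}"
    using cell_top_row[OF k] top_row_one[OF cell_top_row[OF k]] by (auto simp: Y_def)
  moreover have "(X \<union> Y) \<inter> toppled t \<subseteq> Y" if "k \<notin> toppled t"
    using I that entry_01 by (auto simp: tableau_closed_def X_def Y_def)
  moreover have "finite X" "finite Y" "X \<inter> Y = {}"
    using finite_cells_in_col[of k] by (auto simp: X_def Y_def)
  ultimately have "int (deg n R k) \<le> conf t k \<longleftrightarrow> k \<notin> toppled t \<and> Y \<subseteq> toppled t"
    using card_Un_threshold_iff[of X Y "k \<in> toppled t" "toppled t"] by (simp add: deg_col[OF k] XY)
  then show ?thesis
    using k kR by (auto simp: block_Suc unstable_block_def cols_def Y_def)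
qed

lemma row_in_block_Suc_iff_invariant:
  assumes I: "tableau_closed (toppled t)" and F: "conf_formula t" and j: "j \<in> R"
  shows "j \<in> block (Suc t) \<longleftrightarrow>
           even (Suc t) \<and> j \<noteq> 0 \<and> j \<notin> toppled t \<and> (\<forall>k. cell j k \<longrightarrow> T j k = 0 \<longrightarrow> k \<in> toppled t)"
proof (cases "j = 0")
  case False
  define X where "X = {k. cell j k \<and> T j k = 1}"
  define Y where "Y = {k. cell j k \<and> T j k = 0}"
  have XY: "{k. cell j k} = X \<union> Y" by (auto simp: X_def Y_def dest: entry_01)
  have "conf t j = int (card X) + int (card ((X \<union> Y) \<inter> toppled t))
                     - (if j \<in> toppled t then int (card (X \<union> Y)) else 0)"
  proof -
    have "{v \<in> toppled t. adj n R v j} = (X \<union> Y) \<inter> toppled t"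
      using j by (auto simp: adj_row XY[symmetric])
    then show ?thesis
      using F False j unfolding conf_formula_def by (simp add: phiTC_def X_def deg_row XY)
  qed
  moreover have "Y \<noteq> {}" using row_has_zero[OF j False] by (auto simp: Y_def)
  moreover have "(X \<union> Y) \<inter> toppled t \<subseteq> Y" if "j \<notin> toppled t"
    using I that entry_01 by (auto simp: tableau_closed_def X_def Y_def)
  moreover have "finite X" "finite Y" "X \<inter> Y = {}"
    using finite_cells_in_row[of j] by (auto simp: X_def Y_def)
  ultimately have "int (deg n R j) \<le> conf t j \<longleftrightarrow> j \<notin> toppled t \<and> Y \<subseteq> toppled t"
    using card_Un_threshold_iff[of X Y "j \<in> toppled t" "toppled t"] by (simp add: deg_row[OF j] XY)
  then show ?thesis
    using j rows_subset False by (auto simp: block_Suc unstable_block_def cols_def Y_def)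
qed (use block_Suc_subset[of t] in force)

lemma block_Suc_disjoint_invariant:
  assumes "tableau_closed (toppled t)" and "conf_formula t"
  shows "block (Suc t) \<inter> toppled t = {}"
proof -
  have "v \<notin> toppled t" if v: "v \<in> block (Suc t)" for v
  proof (cases "v \<in> R")
    case True
    then show ?thesis using v row_in_block_Suc_iff_invariant[OF assms] by blast
  next
    case False
    then have "v \<in> cols n R" using v block_Suc_subset[of t] by (force simp: cols_def)
    then show ?thesis using v col_in_block_Suc_iff_invariant[OF assms] by blast
  qed
  then show ?thesis by blast
qed

lemma tableau_closed_Suc:
  assumes I: "tableau_closed (toppled t)" and F: "conf_formula t"
  shows "tableau_closed (toppled (Suc t))"
  unfolding tableau_closed_def toppled_Suc
proof (intro conjI allI impI)
  fix i k assume "cell i k" "T i k = 0" "i \<in> toppled t \<union> block (Suc t)"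
  moreover have "i \<in> R" using \<open>cell i k\<close> by (simp add: is_cell_def)
  ultimately show "k \<in> toppled t \<union> block (Suc t)"
    using I row_in_block_Suc_iff_invariant[OF I F] unfolding tableau_closed_def by blast
next
  fix i k assume "cell i k" "T i k = 1" "k \<in> toppled t \<union> block (Suc t)"
  moreover have "k \<in> cols n R" using \<open>cell i k\<close> by (simp add: is_cell_def)
  ultimately show "i \<in> toppled t \<union> block (Suc t)"
    using I col_in_block_Suc_iff_invariant[OF I F] unfolding tableau_closed_def by blast
qed

lemma tableau_closed_0: "tableau_closed (toppled 0)"
  unfolding tableau_closed_def toppled_0
proof (intro conjI allI impI)
  fix i k assume "cell i k" "T i k = 0" "i \<in> {0}"
  then show "k \<in> {0}" using top_row_one by simp
next
  fix i k assume "cell i k" "k \<in> {0}"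
  then show "i \<in> {0}" by (simp add: is_cell_def)
qed

lemma toppling_invariants: "tableau_closed (toppled t) \<and> conf_formula t"
proof (induction t)
  case 0
  then show ?case using tableau_closed_0 conf_formula_0 by simp
next
  case (Suc t)
  then show ?case
    using tableau_closed_Suc conf_formula_Suc block_Suc_disjoint_invariant by blast
qed

lemmas toppled_tableau_closed = toppling_invariants[THEN conjunct1]
  and conf_formula_holds = toppling_invariants[THEN conjunct2]

lemmas col_in_block_Suc_iff =
    col_in_block_Suc_iff_invariant[OF toppled_tableau_closed conf_formula_holds]
  and row_in_block_Suc_iff =
    row_in_block_Suc_iff_invariant[OF toppled_tableau_closed conf_formula_holds]
  and block_Suc_disjoint =
    block_Suc_disjoint_invariant[OF toppled_tableau_closed conf_formula_holds]

lemma block_unique: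
  assumes "v \<in> block s" and "v \<in> block t"
  shows "s = t"
proof -
  have "\<not> s < t" if "v \<in> block s" "v \<in> block t" for s t
  proof
    assume "s < t"
    then obtain t' where "t = Suc t'" "s \<le> t'" by (cases t) auto
    then show False using that block_Suc_disjoint[of t'] by (auto simp: toppled_def)
  qed
  then show ?thesis using assms by (meson linorder_neqE_nat)
qed

lemma phase_eq: "v \<in> block t \<Longrightarrow> phase v = t"
  unfolding block_index_def by (rule Least_equality) (use block_unique in auto)

lemma finite_subset_toppled:
  assumes "finite S" and "S \<subseteq> (\<Union>t. toppled t)"
  obtains t where "S \<subseteq> toppled t"
proof -
  have "subset.chain UNIV (range toppled)"
    unfolding subset_chain_def using toppled_mono nat_le_linear by (simp add: image_iff) metis
  from finite_subset_Union_chain[OF assms _ this] obtain B where "B \<in> range toppled" "S \<subseteq> B"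
    by blast
  then show ?thesis using that by blast
qed

lemma untoppled_col_has_untoppled_one:
  assumes k: "k \<in> cols n R" and untoppled: "k \<notin> (\<Union>t. toppled t)"
  shows "\<exists>i. cell i k \<and> T i k = 1 \<and> i \<notin> (\<Union>t. toppled t)"
proof (rule ccontr)
  assume "\<not> ?thesis"
  then have "{i. cell i k \<and> T i k = 1} \<subseteq> (\<Union>t. toppled t)" by blast
  moreover have "finite {i. cell i k \<and> T i k = 1}"
    by (rule finite_subset[OF _ finite_cells_in_col[of k]]) auto
  ultimately obtain t where t: "{i. cell i k \<and> T i k = 1} \<subseteq> toppled t"
    using finite_subset_toppled by metis
  have "toppled t \<subseteq> toppled (2 * t)" by (rule toppled_mono) simp
  with t have "\<forall>i. cell i k \<longrightarrow> T i k = 1 \<longrightarrow> i \<in> toppled (2 * t)" by blast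
  moreover have "k \<notin> toppled (2 * t)" using untoppled by blast
  ultimately have "k \<in> block (Suc (2 * t))"
    using col_in_block_Suc_iff[OF k, of "2 * t"] by simp
  then show False using untoppled toppled_Suc[of "2 * t"] by blast
qed

lemma untoppled_row_has_untoppled_zero:
  assumes j: "j \<in> R" and untoppled: "j \<notin> (\<Union>t. toppled t)"
  shows "\<exists>k. cell j k \<and> T j k = 0 \<and> k \<notin> (\<Union>t. toppled t)"
proof (rule ccontr)
  assume "\<not> ?thesis"
  then have "{k. cell j k \<and> T j k = 0} \<subseteq> (\<Union>t. toppled t)" by blast
  moreover have "finite {k. cell j k \<and> T j k = 0}"
    by (rule finite_subset[OF _ finite_cells_in_row[of j]]) auto
  ultimately obtain t where t: "{k. cell j k \<and> T j k = 0} \<subseteq> toppled t"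
    using finite_subset_toppled by metis
  have "toppled t \<subseteq> toppled (Suc (2 * t))" by (rule toppled_mono) simp
  with t have "\<forall>k. cell j k \<longrightarrow> T j k = 0 \<longrightarrow> k \<in> toppled (Suc (2 * t))" by blast
  moreover have "j \<notin> toppled (Suc (2 * t))" using untoppled by blast
  moreover have "j \<noteq> 0" using untoppled zero_toppled[of 0] by (metis UNIV_I UN_I)
  ultimately have "j \<in> block (Suc (Suc (2 * t)))"
    using row_in_block_Suc_iff[OF j, of "Suc (2 * t)"] by simp
  then show False using untoppled toppled_Suc[of "Suc (2 * t)"] by blast
qed

definition zero_one_link :: "nat \<Rightarrow> nat \<Rightarrow> bool" where
  "zero_one_link a d \<longleftrightarrow> (\<exists>x. cell a x \<and> T a x = 0 \<and> cell d x \<and> T d x = 1)"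

lemma zero_one_link_shortcut:
  assumes ab: "zero_one_link a b" and bd: "zero_one_link b d" and "a < b"
  shows "zero_one_link a d"
proof -
  obtain x where x: "cell a x" "T a x = 0" "cell b x" "T b x = 1"
    using ab by (auto simp: zero_one_link_def)
  obtain y where y: "cell b y" "T b y = 0" "cell d y" "T d y = 1"
    using bd by (auto simp: zero_one_link_def)
  have ay: "cell a y" using x y \<open>a < b\<close> by (auto simp: is_cell_def)
  show ?thesis
  proof (cases "T a y = 0")
    case True
    then show ?thesis using ay y by (auto simp: zero_one_link_def)
  next
    case False
    then have "T a y = 1" using entry_01[OF ay] by simp
    \<comment> \<open>then rows a < b and columns x, y would form a forbidden rectangle\<close>
    moreover have "x < y \<or> y < x" using x y by (metis less_linear zero_neq_one)
    ultimately have False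
      using no_forbidden_rectangle[of a b x y] no_forbidden_rectangle[of a b y x] x y \<open>a < b\<close>
      by (auto simp: is_cell_def)
    then show ?thesis ..
  qed
qed

lemma no_zero_one_link_cycle:
  assumes "finite W" and "\<forall>a\<in>W. \<exists>d\<in>W. zero_one_link a d"
  shows "W = {}"
  using assms
proof (induction "card W" arbitrary: W rule: less_induct)
  case less
  show ?case
  proof (rule ccontr)
    assume "W \<noteq> {}"
    define b where "b = Max W"
    have b: "b \<in> W" "\<And>a. a \<in> W \<Longrightarrow> a \<le> b"
      using \<open>W \<noteq> {}\<close> less.prems(1) by (auto simp: b_def)
    \<comment> \<open>links into b can be rerouted past b, which lies above every other element of W\<close>
    have "\<forall>a\<in>W - {b}. \<exists>d\<in>W - {b}. zero_one_link a d"
    proof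
      fix a assume a: "a \<in> W - {b}"
      then obtain d where d: "d \<in> W" "zero_one_link a d" using less.prems(2) by auto
      show "\<exists>d\<in>W - {b}. zero_one_link a d"
      proof (cases "d = b")
        case True
        obtain d' where d': "d' \<in> W" "zero_one_link b d'" using less.prems(2) b(1) by auto
        have "a < b" using a b(2) by fastforce
        then have "zero_one_link a d'" using d True d' zero_one_link_shortcut by blast
        moreover have "d' \<noteq> b" using d' by (auto simp: zero_one_link_def)
        ultimately show ?thesis using d' by auto
      qed (use d in auto)
    qed
    moreover have "card (W - {b}) < card W" using less.prems(1) b(1) by (rule card_Diff1_less)
    ultimately have "W - {b} = {}" using less.hyps less.prems(1) by blast
    then have "W = {b}" using b(1) by blast
    then show False using less.prems(2) by (auto simp: zero_one_link_def)
  qed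
qed

lemma eventually_toppled: "v \<le> n \<Longrightarrow> \<exists>t. v \<in> toppled t"
proof -
  define W where "W = R - (\<Union>t. toppled t)"
  have "W = {}"
  proof (rule no_zero_one_link_cycle)
    show "finite W" using rows_subset by (auto simp: W_def intro: finite_subset)
    show "\<forall>a\<in>W. \<exists>d\<in>W. zero_one_link a d"
    proof
      fix a assume "a \<in> W"
      then obtain x where x: "cell a x" "T a x = 0" "x \<notin> (\<Union>t. toppled t)"
        using untoppled_row_has_untoppled_zero[of a] by (auto simp: W_def)
      moreover have "x \<in> cols n R" using x(1) by (simp add: is_cell_def)
      ultimately obtain d where "cell d x" "T d x = 1" "d \<notin> (\<Union>t. toppled t)"
        using untoppled_col_has_untoppled_one by blast
      then show "\<exists>d\<in>W. zero_one_link a d"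
        using x by (auto simp: W_def zero_one_link_def is_cell_def)
    qed
  qed
  moreover assume "v \<le> n"
  ultimately show ?thesis
  proof (cases "v \<in> R")
    case False
    with \<open>v \<le> n\<close> have "v \<in> cols n R" by (simp add: cols_def)
    with \<open>W = {}\<close> show ?thesis
      using untoppled_col_has_untoppled_one[of v] by (auto simp: W_def is_cell_def)
  qed (auto simp: W_def)
qed

lemma in_block_phase: "v \<le> n \<Longrightarrow> v \<in> block (phase v)"
proof -
  assume "v \<le> n"
  then obtain t where "v \<in> block t" using eventually_toppled by (auto simp: toppled_def)
  then show ?thesis using phase_eq by simp
qed

lemma toppled_iff_phase_le: "v \<le> n \<Longrightarrow> v \<in> toppled t \<longleftrightarrow> phase v \<le> t"
  using in_block_phase phase_eq by (auto simp: toppled_def)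

lemma phase_col_Suc:
  assumes k: "k \<in> cols n R"
  obtains s where "phase k = Suc s" "odd (Suc s)" "\<forall>i. cell i k \<longrightarrow> T i k = 1 \<longrightarrow> phase i \<le> s"
proof -
  have "k \<le> n" "k \<noteq> 0" using k col_pos by (auto simp: cols_def)
  then have kb: "k \<in> block (phase k)" by (simp add: in_block_phase)
  with \<open>k \<noteq> 0\<close> have "phase k \<noteq> 0" by (metis block_0 singletonD)
  then obtain s where "phase k = Suc s" by (metis not0_implies_Suc)
  with kb have "phase k = Suc s" "k \<in> block (Suc s)" by simp_all
  moreover have "i \<le> n" if "cell i k" for i using that rows_subset by (auto simp: is_cell_def)
  ultimately show ?thesis
    using that col_in_block_Suc_iff[OF k, of s] toppled_iff_phase_le by auto
qed

lemma phase_row_Suc: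
  assumes j: "j \<in> R" and "j \<noteq> 0"
  obtains s where "phase j = Suc s" "even (Suc s)" "\<forall>k. cell j k \<longrightarrow> T j k = 0 \<longrightarrow> phase k \<le> s"
proof -
  have "j \<le> n" using j rows_subset by auto
  then have jb: "j \<in> block (phase j)" by (simp add: in_block_phase)
  with \<open>j \<noteq> 0\<close> have "phase j \<noteq> 0" by (metis block_0 singletonD)
  then obtain s where "phase j = Suc s" by (metis not0_implies_Suc)
  with jb have "phase j = Suc s" "j \<in> block (Suc s)" by simp_all
  moreover have "k \<le> n" if "cell j k" for k using that by (auto simp: is_cell_def cols_def)
  ultimately show ?thesis
    using that row_in_block_Suc_iff[OF j, of s] toppled_iff_phase_le by auto
qed

lemma odd_phase_col: "k \<in> cols n R \<Longrightarrow> odd (phase k)"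
  by (metis phase_col_Suc)

lemma even_phase_row:
  assumes j: "j \<in> R"
  shows "even (phase j)"
proof (cases "j = 0")
  case True
  then show ?thesis using phase_eq[of 0 0] block_0 by simp
next
  case False
  then show ?thesis using phase_row_Suc[OF j False] by metis
qed

lemma phase_less_of_one:
  assumes "cell i k" and "T i k = 1"
  shows "phase i < phase k"
proof -
  have "k \<in> cols n R" using assms(1) by (simp add: is_cell_def)
  then obtain s where "phase k = Suc s" "\<forall>i. cell i k \<longrightarrow> T i k = 1 \<longrightarrow> phase i \<le> s"
    using phase_col_Suc by metis
  then show ?thesis using assms by auto
qed

lemma phase_less_of_zero:
  assumes "cell i k" and "T i k = 0"
  shows "phase k < phase i"
proof -
  have "i \<in> R" using assms(1) by (simp add: is_cell_def)
  moreover have "i \<noteq> 0" using assms top_row_one[of k] by (cases "i = 0") simp_all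
  ultimately obtain s where "phase i = Suc s" "\<forall>k. cell i k \<longrightarrow> T i k = 0 \<longrightarrow> phase k \<le> s"
    using phase_row_Suc by metis
  then show ?thesis using assms by auto
qed

lemma phase_col_le:
  assumes k: "k \<in> cols n R" and "odd s" and ones: "\<forall>i. cell i k \<longrightarrow> T i k = 1 \<longrightarrow> phase i < s"
  shows "phase k \<le> s"
proof (rule ccontr)
  assume "\<not> phase k \<le> s"
  obtain t where s: "s = Suc t" using \<open>odd s\<close> by (cases s) auto
  have "i \<le> n" if "cell i k" for i using that rows_subset by (auto simp: is_cell_def)
  then have "k \<in> block (Suc t)"
    using col_in_block_Suc_iff[OF k, of t] toppled_iff_phase_le k ones \<open>odd s\<close> \<open>\<not> phase k \<le> s\<close> s
    by (auto simp: cols_def)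
  then show False using phase_eq \<open>\<not> phase k \<le> s\<close> s by simp
qed

lemma phase_row_le:
  assumes j: "j \<in> R" "j \<noteq> 0" and "even s" "0 < s"
    and zeros: "\<forall>k. cell j k \<longrightarrow> T j k = 0 \<longrightarrow> phase k < s"
  shows "phase j \<le> s"
proof (rule ccontr)
  assume "\<not> phase j \<le> s"
  obtain t where s: "s = Suc t" using \<open>0 < s\<close> by (cases s) auto
  have "k \<le> n" if "cell j k" for k using that by (auto simp: is_cell_def cols_def)
  then have "j \<in> block (Suc t)"
    using row_in_block_Suc_iff[OF j(1), of t] toppled_iff_phase_le j rows_subset zeros \<open>even s\<close>
      \<open>\<not> phase j \<le> s\<close> s
    by auto
  then show False using phase_eq \<open>\<not> phase j \<le> s\<close> s by simp
qed

lemma phase_row_eq_Suc_zero_col: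
  assumes j: "j \<in> R" "j \<noteq> 0"
  obtains k where "cell j k" "T j k = 0" "phase j = Suc (phase k)"
proof -
  define Z where "Z = {k. cell j k \<and> T j k = 0}"
  have "finite Z" by (rule finite_subset[OF _ finite_cells_in_row[of j]]) (auto simp: Z_def)
  moreover have "Z \<noteq> {}" using row_has_zero[OF j] by (auto simp: Z_def)
  ultimately have "Max (phase ` Z) \<in> phase ` Z" by simp
  then obtain k where k: "k \<in> Z" and "phase k = Max (phase ` Z)" by (metis imageE)
  with \<open>finite Z\<close> have max: "\<forall>k'\<in>Z. phase k' \<le> phase k" by simp
  have "phase j \<le> Suc (phase k)"
  proof (rule phase_row_le[OF j])
    show "even (Suc (phase k))" using k odd_phase_col by (simp add: Z_def is_cell_def)
    show "\<forall>k'. cell j k' \<longrightarrow> T j k' = 0 \<longrightarrow> phase k' < Suc (phase k)"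
      using max by (auto simp: Z_def)
  qed simp
  moreover have "phase k < phase j" using k phase_less_of_zero by (simp add: Z_def)
  ultimately have "phase j = Suc (phase k)" by simp
  with k show ?thesis using that unfolding Z_def by blast
qed

lemma phase_col_le_iff:
  assumes k: "k \<in> cols n R" and k': "k' \<in> cols n R" and "k < k'"
  shows "phase k \<le> phase k' \<longleftrightarrow> (\<forall>i \<in> R. i < k \<longrightarrow> T i k' = 0 \<longrightarrow> T i k = 0)"
proof
  assume le: "phase k \<le> phase k'"
  show "\<forall>i \<in> R. i < k \<longrightarrow> T i k' = 0 \<longrightarrow> T i k = 0"
  proof (intro ballI impI)
    fix i assume "i \<in> R" "i < k" "T i k' = 0"
    then have "cell i k" "cell i k'" using k k' \<open>k < k'\<close> by (auto simp: is_cell_def)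
    then show "T i k = 0"
      using phase_less_of_zero[of i k'] phase_less_of_one[of i k] entry_01 le \<open>T i k' = 0\<close>
      by fastforce
  qed
next
  assume imp: "\<forall>i \<in> R. i < k \<longrightarrow> T i k' = 0 \<longrightarrow> T i k = 0"
  show "phase k \<le> phase k'"
  proof (rule phase_col_le[OF k odd_phase_col[OF k']], intro allI impI)
    fix i assume "cell i k" "T i k = 1"
    then have "cell i k'" "T i k' \<noteq> 0" using imp k' \<open>k < k'\<close> by (auto simp: is_cell_def)
    then have "T i k' = 1" by (metis entry_01)
    then show "phase i < phase k'" using phase_less_of_one \<open>cell i k'\<close> by blast
  qed
qed

lemma phase_col_less_row_iff:
  assumes j: "j \<in> R" and k: "k \<in> cols n R" and "k < j"
  shows "phase k < phase j \<longleftrightarrow> (\<exists>k' \<in> cols n R. j < k' \<and> T j k' = 0 \<and> phase k \<le> phase k')"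
proof
  assume "phase k < phase j"
  moreover have "j \<noteq> 0" using \<open>k < j\<close> by simp
  then obtain k' where "cell j k'" "T j k' = 0" "phase j = Suc (phase k')"
    using phase_row_eq_Suc_zero_col[OF j] by blast
  ultimately show "\<exists>k' \<in> cols n R. j < k' \<and> T j k' = 0 \<and> phase k \<le> phase k'"
    by (auto simp: is_cell_def)
next
  assume "\<exists>k' \<in> cols n R. j < k' \<and> T j k' = 0 \<and> phase k \<le> phase k'"
  then obtain k' where "cell j k'" "T j k' = 0" "phase k \<le> phase k'"
    using j by (auto simp: is_cell_def)
  then show "phase k < phase j" using phase_less_of_zero by fastforce
qed

end

theorem proposition4p15:
  fixes n :: nat and R :: "nat set" and T :: "nat \<Rightarrow> nat \<Rightarrow> nat" and j k :: nat
  assumes "ferrers n R"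
    and "T \<in> EWtab n R"
    and "j \<in> R" and "k \<in> cols n R" and "j > k"
  shows "supp_tab n R T j k =
           (if \<exists>k' \<in> cols n R. k' > j \<and> T j k' = 0 \<and>
                  (\<forall>j' \<in> R. j' < k \<longrightarrow> T j' k' = 0 \<longrightarrow> T j' k = 0)
            then 0 else 1)"
proof -
  interpret ew_tableau n R T using assms(1,2) by unfold_locales
  have "phase j \<noteq> phase k"
    using even_phase_row[OF assms(3)] odd_phase_col[OF assms(4)] by metis
  then have "supp_tab n R T j k = (if phase k < phase j then 0 else 1)"
    by (auto simp: supp_tab_def)
  also have "phase k < phase j \<longleftrightarrow> (\<exists>k' \<in> cols n R. j < k' \<and> T j k' = 0 \<and> phase k \<le> phase k')"
    using phase_col_less_row_iff assms(3-5) by blast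
  also have "\<dots> \<longleftrightarrow> (\<exists>k' \<in> cols n R. k' > j \<and> T j k' = 0 \<and>
                         (\<forall>j' \<in> R. j' < k \<longrightarrow> T j' k' = 0 \<longrightarrow> T j' k = 0))"
    using phase_col_le_iff[OF assms(4)] assms(5) by (meson less_trans)
  finally show ?thesis .
qed

end
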